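(* Fix $b\in\{0,1\}$ with $0<\mathbb{P}(g=1\mid y=b)<1$, and suppose $\theta\mapsto\mathbb{P}(g=1\mid x=\theta,y=b)$ on $[0,1]$ has a single crossing with the constant $\mathbb{P}(g=1\mid y=b)$, with crossing point $\theta_U$. Let $D_b(\theta)=\mathbb{P}(x\ge\theta\mid g=1,y=b)-\mathbb{P}(x\ge\theta\mid g=0,y=b)$. Then $D_b$ is nondecreasing on $[0,\theta_U]$, nonincreasing on $[\theta_U,1]$ and nonnegative on $[0,1]$. Consequently the TPR-unfairness (case $b=1$), respectively FPR-unfairness (case $b=0$), $U(\theta)=|D_b(\theta)|=D_b(\theta)$ is positively unimodal with global maximum at $\theta_U$.
   Context: $(g,x,y)$ is a random triple with group $g\in\{0,1\}$, label $y\in\{0,1\}$ and real feature $x\in[0,1]$; $x$ has a density $h_x$ strictly positive on $[0,1]$, all conditional densities of $x$ given $g$, $y$, or $(g,y)$ exist and are strictly positive on $[0,1]$, and the conditional probabilities $\theta\mapsto\mathbb{P}(y=1\mid x=\theta)$, $\mathbb{P}(g=1\mid x=\theta)$, $\mathbb{P}(g=1\mid x=\theta,y=b)$ are continuous in $\theta$; $0<\mathbb{P}(g=1)<1$ and $0<\mathbb{P}(y=1)<1$. A threshold classifier is $f_\theta(x)=\mathbb{I}[x\ge\theta]$. $\mathrm{TPR}(\theta\mid g)=\mathbb{P}(x\ge\theta\mid g,y=1)$, $\mathrm{FPR}(\theta\mid g)=\mathbb{P}(x\ge\theta\mid g,y=0)$, and $U_{\mathcal M}(\theta)=|\mathcal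 M(\theta\mid g=1)-\mathcal M(\theta\mid g=0)|$ for $\mathcal M\in\{\mathrm{TPR},\mathrm{FPR}\}$. A function $q$ on $[0,1]$ has a single crossing with a constant $v$ if there is $z\in[0,1]$ with $q(t)\le v$ for $t\le z$ and $q(t)\ge v$ for $t\ge z$ ($z$ is a crossing point). *)

theory Defs
  imports "HOL-Analysis.Analysis"
begin

text \<open>The law of the random triple (g,x,y) is described by the joint densities
  h g y t, for g,y in {0,1}: P(g = g0, y = y0, x in A) = integral over A of h g0 y0.\<close>

definition pr_gy :: "(nat \<Rightarrow> nat \<Rightarrow> real \<Rightarrow> real) \<Rightarrow> nat \<Rightarrow> nat \<Rightarrow> real" where
  "pr_gy h g y = integral {0..1} (h g y)"

definition cond_tail :: "(nat \<Rightarrow> nat \<Rightarrow> real \<Rightarrow> real) \<Rightarrow> nat \<Rightarrow> nat \<Rightarrow> real \<Rightarrow> real" where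
  "cond_tail h g y \<theta> = integral {\<theta>..1} (h g y) / pr_gy h g y"

definition TPR :: "(nat \<Rightarrow> nat \<Rightarrow> real \<Rightarrow> real) \<Rightarrow> real \<Rightarrow> nat \<Rightarrow> real" where
  "TPR h \<theta> g = cond_tail h g 1 \<theta>"

definition FPR :: "(nat \<Rightarrow> nat \<Rightarrow> real \<Rightarrow> real) \<Rightarrow> real \<Rightarrow> nat \<Rightarrow> real" where
  "FPR h \<theta> g = cond_tail h g 0 \<theta>"

definition unfairness :: "(real \<Rightarrow> nat \<Rightarrow> real) \<Rightarrow> real \<Rightarrow> real" where
  "unfairness M \<theta> = \<bar>M \<theta> 1 - M \<theta> 0\<bar>"

definition pr_g1_given_y :: "(nat \<Rightarrow> nat \<Rightarrow> real \<Rightarrow> real) \<Rightarrow> nat \<Rightarrow> real" where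
  "pr_g1_given_y h b = pr_gy h 1 b / (pr_gy h 0 b + pr_gy h 1 b)"

definition pr_g1_given_xy :: "(nat \<Rightarrow> nat \<Rightarrow> real \<Rightarrow> real) \<Rightarrow> nat \<Rightarrow> real \<Rightarrow> real" where
  "pr_g1_given_xy h b \<theta> = h 1 b \<theta> / (h 0 b \<theta> + h 1 b \<theta>)"

definition pr_g1_given_x :: "(nat \<Rightarrow> nat \<Rightarrow> real \<Rightarrow> real) \<Rightarrow> real \<Rightarrow> real" where
  "pr_g1_given_x h \<theta> = (h 1 0 \<theta> + h 1 1 \<theta>) / (h 0 0 \<theta> + h 0 1 \<theta> + h 1 0 \<theta> + h 1 1 \<theta>)"

definition pr_y1_given_x :: "(nat \<Rightarrow> nat \<Rightarrow> real \<Rightarrow> real) \<Rightarrow> real \<Rightarrow> real" where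
  "pr_y1_given_x h \<theta> = (h 0 1 \<theta> + h 1 1 \<theta>) / (h 0 0 \<theta> + h 0 1 \<theta> + h 1 0 \<theta> + h 1 1 \<theta>)"

definition valid_model :: "(nat \<Rightarrow> nat \<Rightarrow> real \<Rightarrow> real) \<Rightarrow> bool" where
  "valid_model h \<longleftrightarrow>
     (\<forall>g\<in>{0,1}. \<forall>y\<in>{0,1}. h g y integrable_on {0..1} \<and> (\<forall>t\<in>{0..1}. h g y t > 0)) \<and>
     (\<Sum>g\<in>{0,1::nat}. \<Sum>y\<in>{0,1::nat}. pr_gy h g y) = 1 \<and>
     continuous_on {0..1} (pr_y1_given_x h) \<and>
     continuous_on {0..1} (pr_g1_given_x h) \<and>
     (\<forall>b\<in>{0,1}. continuous_on {0..1} (pr_g1_given_xy h b))"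

definition single_crossing :: "(real \<Rightarrow> real) \<Rightarrow> real \<Rightarrow> real \<Rightarrow> bool" where
  "single_crossing q v z \<longleftrightarrow> z \<in> {0..1} \<and>
     (\<forall>t\<in>{0..1}. t \<le> z \<longrightarrow> q t \<le> v) \<and> (\<forall>t\<in>{0..1}. z \<le> t \<longrightarrow> v \<le> q t)"

end

theory Submission
  imports Defs
begin

text \<open>Write \<open>r = f\<^sub>1 - f\<^sub>0\<close> for the difference of the conditional densities of \<open>x\<close> given
  \<open>(g = 1, y = b)\<close> and \<open>(g = 0, y = b)\<close>, so that \<open>D\<^sub>b(\<theta>) = \<integral>\<^sub>\<theta>\<^sup>1 r\<close>. Since
  \<open>P(g=1 | x, y=b) / P(g=0 | x, y=b) = (P(g=1 | y=b) / P(g=0 | y=b)) \<cdot> f\<^sub>1 / f\<^sub>0\<close>, the sign of \<open>r\<close>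
  is the sign of \<open>P(g=1 | x, y=b) - P(g=1 | y=b)\<close>; by single crossing, \<open>r \<le> 0\<close> left of \<open>\<theta>\<^sub>U\<close>
  and \<open>r \<ge> 0\<close> right of it. Hence the tail integral \<open>D\<^sub>b\<close> increases up to \<open>\<theta>\<^sub>U\<close> and decreases
  after it, and as \<open>D\<^sub>b(0) = 1 - 1 = 0 = D\<^sub>b(1)\<close> it is nonnegative, so \<open>U = |D\<^sub>b| = D\<^sub>b\<close>.\<close>

lemma mono_on_integral_tail:
  fixes r :: "real \<Rightarrow> real"
  assumes "r integrable_on {a..c}" and "b \<le> c" and "\<And>t. t \<in> {a..b} \<Longrightarrow> r t \<le> 0"
  shows "mono_on {a..b} (\<lambda>\<theta>. integral {\<theta>..c} r)"
proof (rule mono_onI)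
  fix s t assume st: "s \<in> {a..b}" "t \<in> {a..b}" "s \<le> t"
  have r_int: "r integrable_on {s..c}"
    using integrable_subinterval_real[OF assms(1)] st by auto
  have "integral {s..t} r \<le> 0"
    using integral_le[of r "{s..t}" "\<lambda>_. 0"] integrable_subinterval_real[OF r_int] st assms(2,3)
    by auto
  moreover have "integral {s..t} r + integral {t..c} r = integral {s..c} r"
    using Henstock_Kurzweil_Integration.integral_combine[OF _ _ r_int] st assms(2) by auto
  ultimately show "integral {s..c} r \<le> integral {t..c} r"
    by linarith
qed

lemma antimono_on_integral_tail:
  fixes r :: "real \<Rightarrow> real"
  assumes "r integrable_on {b..c}" and "\<And>t. t \<in> {b..c} \<Longrightarrow> 0 \<le> r t"
  shows "antimono_on {b..c} (\<lambda>\<theta>. integral {\<theta>..c} r)"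
proof (rule monotone_onI)
  fix s t assume st: "s \<in> {b..c}" "t \<in> {b..c}" "s \<le> t"
  have r_int: "r integrable_on {s..c}"
    using integrable_subinterval_real[OF assms(1)] st by auto
  have "0 \<le> integral {s..t} r"
    using integral_nonneg[of r "{s..t}"] integrable_subinterval_real[OF r_int] st assms(2)
    by auto
  moreover have "integral {s..t} r + integral {t..c} r = integral {s..c} r"
    using Henstock_Kurzweil_Integration.integral_combine[OF _ _ r_int] st by auto
  ultimately show "integral {t..c} r \<le> integral {s..c} r"
    by linarith
qed

lemma unimodal_on_bounds:
  fixes F :: "real \<Rightarrow> real"
  assumes "mono_on {a..z} F" and "antimono_on {z..c} F"
    and "z \<in> {a..c}" and "\<theta> \<in> {a..c}"
  shows "min (F a) (F c) \<le> F \<theta>" and "F \<theta> \<le> F z"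
proof -
  have "min (F a) (F c) \<le> F \<theta> \<and> F \<theta> \<le> F z"
  proof (cases "\<theta> \<le> z")
    case True
    then show ?thesis
      using mono_onD[OF assms(1), of a \<theta>] mono_onD[OF assms(1), of \<theta> z] assms(3,4) by auto
  next
    case False
    then show ?thesis
      using monotone_onD[OF assms(2), of \<theta> c] monotone_onD[OF assms(2), of z \<theta>] assms(3,4)
      by auto
  qed
  then show "min (F a) (F c) \<le> F \<theta>" and "F \<theta> \<le> F z"
    by auto
qed

lemma sgn_diff_normalized:
  fixes u v p q :: real
  assumes "0 < u" and "0 < v" and "0 < p" and "0 < q"
  shows "sgn (v / q - u / p) = sgn (v / (u + v) - q / (p + q))"
proof -
  have "v / q - u / p = (v * p - u * q) / (p * q)"
    using assms by (simp add: field_simps)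
  moreover have "v / (u + v) - q / (p + q) = (v * p - u * q) / ((u + v) * (p + q))"
    using assms by (simp add: field_simps)
  ultimately show ?thesis
    using assms by (simp add: sgn_pos)
qed

definition cond_density :: "(nat \<Rightarrow> nat \<Rightarrow> real \<Rightarrow> real) \<Rightarrow> nat \<Rightarrow> nat \<Rightarrow> real \<Rightarrow> real" where
  "cond_density h g y t = h g y t / pr_gy h g y"

lemma cond_tail_eq_integral_cond_density:
  "cond_tail h g y \<theta> = integral {\<theta>..1} (cond_density h g y)"
proof -
  have "cond_density h g y = (\<lambda>t. h g y t / pr_gy h g y)"
    by (simp add: fun_eq_iff cond_density_def)
  then show ?thesis
    by (simp add: cond_tail_def)
qed

lemma cond_density_integrable:
  assumes "valid_model h" and "g \<in> {0,1}" and "y \<in> {0,1}"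
  shows "cond_density h g y integrable_on {0..1}"
  using assms unfolding valid_model_def cond_density_def
  by (auto intro: integrable_on_divide)

lemma cond_tail_0:
  assumes "pr_gy h g y \<noteq> 0"
  shows "cond_tail h g y 0 = 1"
  using assms by (simp add: cond_tail_def pr_gy_def)

lemma pr_gy_pos_of_pr_g1_given_y:
  assumes "valid_model h" and "b \<in> {0,1}"
    and "0 < pr_g1_given_y h b" and "pr_g1_given_y h b < 1"
  shows "0 < pr_gy h 0 b" and "0 < pr_gy h 1 b"
proof -
  have "0 \<le> pr_gy h g b" if "g \<in> {0,1}" for g
  proof -
    have "h g b integrable_on {0..1}" and "\<forall>t\<in>{0..1}. 0 < h g b t"
      using assms(1,2) that unfolding valid_model_def by auto
    then show ?thesis
      unfolding pr_gy_def by (intro integral_nonneg) (auto simp: less_imp_le)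
  qed
  then have "0 \<le> pr_gy h 0 b" and "0 \<le> pr_gy h 1 b"
    by auto
  moreover have "pr_gy h 1 b \<noteq> 0"
    using assms(3) by (auto simp: pr_g1_given_y_def)
  moreover from this have "pr_gy h 0 b \<noteq> 0"
    using assms(4) by (auto simp: pr_g1_given_y_def)
  ultimately show "0 < pr_gy h 0 b" and "0 < pr_gy h 1 b"
    by auto
qed

lemma sgn_cond_density_diff:
  assumes "valid_model h" and "b \<in> {0,1}" and "t \<in> {0..1}"
    and "0 < pr_gy h 0 b" and "0 < pr_gy h 1 b"
  shows "sgn (cond_density h 1 b t - cond_density h 0 b t)
    = sgn (pr_g1_given_xy h b t - pr_g1_given_y h b)"
  using sgn_diff_normalized[of "h 0 b t" "h 1 b t" "pr_gy h 0 b" "pr_gy h 1 b"] assms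
  unfolding valid_model_def cond_density_def pr_g1_given_xy_def pr_g1_given_y_def
  by auto

lemma cond_tail_diff_eq_integral:
  assumes "valid_model h" and "b \<in> {0,1}" and "\<theta> \<in> {0..1}"
  shows "cond_tail h 1 b \<theta> - cond_tail h 0 b \<theta>
    = integral {\<theta>..1} (\<lambda>t. cond_density h 1 b t - cond_density h 0 b t)"
  using integrable_subinterval_real[OF cond_density_integrable[OF assms(1)]] assms(2,3)
  by (auto simp: cond_tail_eq_integral_cond_density integral_diff)

lemma cond_density_diff_sign_change:
  assumes "valid_model h" and "b \<in> {0,1}"
    and "0 < pr_g1_given_y h b" and "pr_g1_given_y h b < 1"
    and "single_crossing (pr_g1_given_xy h b) (pr_g1_given_y h b) \<theta>U"
  shows "\<And>t. t \<in> {0..\<theta>U} \<Longrightarrow> cond_density h 1 b t - cond_density h 0 b t \<le> 0"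
    and "\<And>t. t \<in> {\<theta>U..1} \<Longrightarrow> 0 \<le> cond_density h 1 b t - cond_density h 0 b t"
proof -
  note sign = sgn_cond_density_diff[OF assms(1,2) _ pr_gy_pos_of_pr_g1_given_y[OF assms(1-4)]]
  have \<theta>U: "\<theta>U \<in> {0..1}"
    using assms(5) by (simp add: single_crossing_def)
  fix t
  show "cond_density h 1 b t - cond_density h 0 b t \<le> 0" if "t \<in> {0..\<theta>U}"
  proof -
    have "t \<in> {0..1}" and "pr_g1_given_xy h b t \<le> pr_g1_given_y h b"
      using assms(5) \<theta>U that by (auto simp: single_crossing_def)
    then show ?thesis
      using sign[of t] by (metis diff_le_0_iff_le sgn_le_0_iff)
  qed
  show "0 \<le> cond_density h 1 b t - cond_density h 0 b t" if "t \<in> {\<theta>U..1}"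
  proof -
    have "t \<in> {0..1}" and "pr_g1_given_y h b \<le> pr_g1_given_xy h b t"
      using assms(5) \<theta>U that by (auto simp: single_crossing_def)
    then show ?thesis
      using sign[of t] by (metis diff_ge_0_iff_ge zero_le_sgn_iff)
  qed
qed

lemma cond_tail_diff_unimodal:
  assumes "valid_model h" and "b \<in> {0,1}"
    and "0 < pr_g1_given_y h b" and "pr_g1_given_y h b < 1"
    and "single_crossing (pr_g1_given_xy h b) (pr_g1_given_y h b) \<theta>U"
  shows "mono_on {0..\<theta>U} (\<lambda>\<theta>. cond_tail h 1 b \<theta> - cond_tail h 0 b \<theta>)"
    and "antimono_on {\<theta>U..1} (\<lambda>\<theta>. cond_tail h 1 b \<theta> - cond_tail h 0 b \<theta>)"
proof -
  define r where "r = (\<lambda>t. cond_density h 1 b t - cond_density h 0 b t)"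
  have r_int: "r integrable_on {0..1}"
    unfolding r_def using cond_density_integrable[OF assms(1)] assms(2)
    by (intro integrable_diff) auto
  have \<theta>U: "\<theta>U \<in> {0..1}"
    using assms(5) by (simp add: single_crossing_def)
  have tail: "\<And>\<theta>. \<theta> \<in> {0..1} \<Longrightarrow> cond_tail h 1 b \<theta> - cond_tail h 0 b \<theta> = integral {\<theta>..1} r"
    unfolding r_def using cond_tail_diff_eq_integral[OF assms(1,2)] .
  have sign: "\<And>t. t \<in> {0..\<theta>U} \<Longrightarrow> r t \<le> 0" "\<And>t. t \<in> {\<theta>U..1} \<Longrightarrow> 0 \<le> r t"
    unfolding r_def using cond_density_diff_sign_change[OF assms] by auto
  have "mono_on {0..\<theta>U} (\<lambda>\<theta>. integral {\<theta>..1} r)"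
    using mono_on_integral_tail[OF r_int _ sign(1)] \<theta>U by simp
  then show "mono_on {0..\<theta>U} (\<lambda>\<theta>. cond_tail h 1 b \<theta> - cond_tail h 0 b \<theta>)"
    using tail \<theta>U by (simp add: monotone_on_def)
  have "antimono_on {\<theta>U..1} (\<lambda>\<theta>. integral {\<theta>..1} r)"
    using antimono_on_integral_tail[OF _ sign(2)] integrable_subinterval_real[OF r_int] \<theta>U
    by simp
  then show "antimono_on {\<theta>U..1} (\<lambda>\<theta>. cond_tail h 1 b \<theta> - cond_tail h 0 b \<theta>)"
    using tail \<theta>U by (simp add: monotone_on_def)
qed

theorem mainTheorem4:
  fixes h :: "nat \<Rightarrow> nat \<Rightarrow> real \<Rightarrow> real" and b :: nat and \<theta>U :: real
  assumes "valid_model h"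
    and "b \<in> {0,1}"
    and "0 < pr_g1_given_y h b" and "pr_g1_given_y h b < 1"
    and "single_crossing (pr_g1_given_xy h b) (pr_g1_given_y h b) \<theta>U"
  defines "D \<equiv> (\<lambda>\<theta>. cond_tail h 1 b \<theta> - cond_tail h 0 b \<theta>)"
    and "U \<equiv> (if b = 1 then unfairness (TPR h) else unfairness (FPR h))"
  shows "mono_on {0..\<theta>U} D \<and> antimono_on {\<theta>U..1} D \<and> (\<forall>\<theta>\<in>{0..1}. 0 \<le> D \<theta>) \<and>
         (\<forall>\<theta>\<in>{0..1}. U \<theta> = D \<theta>) \<and>
         mono_on {0..\<theta>U} U \<and> antimono_on {\<theta>U..1} U \<and> (\<forall>\<theta>\<in>{0..1}. U \<theta> \<le> U \<theta>U)"
proof -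
  have \<theta>U: "\<theta>U \<in> {0..1}"
    using assms(5) by (simp add: single_crossing_def)
  have mono_D: "mono_on {0..\<theta>U} D" and antimono_D: "antimono_on {\<theta>U..1} D"
    unfolding D_def using cond_tail_diff_unimodal[OF assms(1-5)] by auto
  have "D 0 = 0"
    using pr_gy_pos_of_pr_g1_given_y[OF assms(1-4)] by (simp add: D_def cond_tail_0)
  moreover have "D 1 = 0"
    by (simp add: D_def cond_tail_def)
  ultimately have D_nonneg: "\<forall>\<theta>\<in>{0..1}. 0 \<le> D \<theta>"
    using unimodal_on_bounds(1)[OF mono_D antimono_D \<theta>U] by fastforce
  have U_D: "\<forall>\<theta>\<in>{0..1}. U \<theta> = D \<theta>"
    using D_nonneg assms(2) by (auto simp: U_def D_def unfairness_def TPR_def FPR_def)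
  then have "mono_on {0..\<theta>U} U" and "antimono_on {\<theta>U..1} U"
    using mono_D antimono_D \<theta>U by (auto simp: monotone_on_def)
  moreover have "\<forall>\<theta>\<in>{0..1}. U \<theta> \<le> U \<theta>U"
    using unimodal_on_bounds(2)[OF mono_D antimono_D \<theta>U] U_D \<theta>U by auto
  ultimately show ?thesis
    using mono_D antimono_D D_nonneg U_D by blast
qed

end
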